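(* Let $(Q,\star)$ be a left-non-degenerate weak RC-system on a quiver $Q$ over $\Lambda$. Then its completion $(\hat Q,\hat\star)$ is a unital weak RC-system, whose unit family is the family $\{\epsilon_\lambda\}_{\lambda\in\Lambda}$ of inserted loops.
   Context: A weak RC-system $(Q,\star)$ is a quiver with partial operation such that: $x\star y$ defined only if $\mathfrak{s}(x)=\mathfrak{s}(y)$; if $x\star y$ is defined then $y\star x$ is defined, $\mathfrak{s}(x\star y)=\mathfrak{t}(x)$, $\mathfrak{s}(y\star x)=\mathfrak{t}(y)$, $\mathfrak{t}(x\star y)=\mathfrak{t}(y\star x)$; and if $x\star y$, $x\star z$, $(x\star y)\star(x\star z)$ are defined then $y\star z$, $(y\star x)\star(y\star z)$ are defined and $(x\star y)\star(x\star z)=(y\star x)\star(y\star z)$. Left-non-degenerate: each $x\star\cdot\colon Q(\mathfrak{s}(x),\Lambda)\to Q(\mathfrak{t}(x),\Lambda)$ is a bijection. The completion $(\hat Q,\hat\star)$: $\hat Q=Q\cup\{\epsilon_\lambda\mid\lambda\in\Lambda\}$ with new loops $\epsilon_\lambda\colon\lambda\to\lambda$ not in $Q$, and $\epsilon_{\mathfrak{s}(y)}\hat\star y:=y$, $x\hat\star\epsilon_{\mathfrak{s}(x)}:=\epsilon_{\mathfrak{t}(x)}$, $x\hat\star x:=\epsilon_{\mathfrak{t}(x)}$, $x\hat\star y:=x\star y$ in all remaining cases. A unit family of a weak RC-system is a family of loops $\epsilon_\lambda\in Q(\lambda,\lambda)$ such that, for all $x$, $x\star\epsilon_{\mathfrak{s}(x)}=\epsilon_{\mathfrak{t}(x)}$,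 $\epsilon_{\mathfrak{s}(x)}\star x=x$ and $x\star x=\epsilon_{\mathfrak{t}(x)}$ (all defined). The system is unital if it has a unit family and for all $x,y$ with common target $\mu$, $x\star y=y\star x=\epsilon_\mu$ implies $x=y$. *)

theory Defs
  imports Main
begin

text \<open>A quiver over the vertex set V (= Lambda): arrow set A with source s and target t.
  A partial binary operation on arrows is a function returning an option.\<close>

definition quiver :: "'v set \<Rightarrow> 'a set \<Rightarrow> ('a \<Rightarrow> 'v) \<Rightarrow> ('a \<Rightarrow> 'v) \<Rightarrow> bool" where
  "quiver V A s t \<longleftrightarrow> (\<forall>x\<in>A. s x \<in> V \<and> t x \<in> V)"

definition weak_RC_system ::
  "'v set \<Rightarrow> 'a set \<Rightarrow> ('a \<Rightarrow> 'v) \<Rightarrow> ('a \<Rightarrow> 'v) \<Rightarrow> ('a \<Rightarrow> 'a \<Rightarrow> 'a option) \<Rightarrow> bool" where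
  "weak_RC_system V A s t star \<longleftrightarrow>
     quiver V A s t \<and>
     (\<forall>x y z. star x y = Some z \<longrightarrow> x \<in> A \<and> y \<in> A \<and> z \<in> A) \<and>
     (\<forall>x\<in>A. \<forall>y\<in>A. star x y \<noteq> None \<longrightarrow> s x = s y) \<and>
     (\<forall>x\<in>A. \<forall>y\<in>A. star x y \<noteq> None \<longrightarrow>
         star y x \<noteq> None \<and>
         s (the (star x y)) = t x \<and> s (the (star y x)) = t y \<and>
         t (the (star x y)) = t (the (star y x))) \<and>
     (\<forall>x\<in>A. \<forall>y\<in>A. \<forall>z\<in>A.
         star x y \<noteq> None \<and> star x z \<noteq> None \<and>
         star (the (star x y)) (the (star x z)) \<noteq> None \<longrightarrow>
           star y z \<noteq> None \<and> star (the (star y x)) (the (star y z)) \<noteq> None \<and>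
           star (the (star x y)) (the (star x z)) = star (the (star y x)) (the (star y z)))"

definition left_non_degenerate ::
  "'v set \<Rightarrow> 'a set \<Rightarrow> ('a \<Rightarrow> 'v) \<Rightarrow> ('a \<Rightarrow> 'v) \<Rightarrow> ('a \<Rightarrow> 'a \<Rightarrow> 'a option) \<Rightarrow> bool" where
  "left_non_degenerate V A s t star \<longleftrightarrow>
     (\<forall>x\<in>A. (\<forall>y\<in>A. s y = s x \<longrightarrow> star x y \<noteq> None) \<and>
        bij_betw (\<lambda>y. the (star x y)) {y\<in>A. s y = s x} {z\<in>A. s z = t x})"

definition unit_family ::
  "'v set \<Rightarrow> 'a set \<Rightarrow> ('a \<Rightarrow> 'v) \<Rightarrow> ('a \<Rightarrow> 'v) \<Rightarrow> ('a \<Rightarrow> 'a \<Rightarrow> 'a option) \<Rightarrow> ('v \<Rightarrow> 'a) \<Rightarrow> bool" where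
  "unit_family V A s t star e \<longleftrightarrow>
     (\<forall>l\<in>V. e l \<in> A \<and> s (e l) = l \<and> t (e l) = l) \<and>
     (\<forall>x\<in>A. star x (e (s x)) = Some (e (t x)) \<and>
             star (e (s x)) x = Some x \<and>
             star x x = Some (e (t x)))"

definition unital ::
  "'v set \<Rightarrow> 'a set \<Rightarrow> ('a \<Rightarrow> 'v) \<Rightarrow> ('a \<Rightarrow> 'v) \<Rightarrow> ('a \<Rightarrow> 'a \<Rightarrow> 'a option) \<Rightarrow> bool" where
  "unital V A s t star \<longleftrightarrow>
     (\<exists>e. unit_family V A s t star e \<and>
        (\<forall>x\<in>A. \<forall>y\<in>A. t x = t y \<and> star x y = Some (e (t x)) \<and> star y x = Some (e (t x))
            \<longrightarrow> x = y))"

text \<open>Completion: arrows are Inl x (x an original arrow) and Inr \<lambda> (the new loop \<epsilon>_\<lambda>).\<close>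
definition compl_arrows :: "'v set \<Rightarrow> 'a set \<Rightarrow> ('a + 'v) set" where
  "compl_arrows V A = Inl ` A \<union> Inr ` V"

fun compl_src :: "('a \<Rightarrow> 'v) \<Rightarrow> 'a + 'v \<Rightarrow> 'v" where
  "compl_src s (Inl x) = s x"
| "compl_src s (Inr l) = l"

fun compl_tgt :: "('a \<Rightarrow> 'v) \<Rightarrow> 'a + 'v \<Rightarrow> 'v" where
  "compl_tgt t (Inl x) = t x"
| "compl_tgt t (Inr l) = l"

fun compl_star ::
  "'v set \<Rightarrow> 'a set \<Rightarrow> ('a \<Rightarrow> 'v) \<Rightarrow> ('a \<Rightarrow> 'v) \<Rightarrow> ('a \<Rightarrow> 'a \<Rightarrow> 'a option)
    \<Rightarrow> 'a + 'v \<Rightarrow> 'a + 'v \<Rightarrow> ('a + 'v) option" where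
  "compl_star V A s t star (Inr l) (Inr m) =
     (if l \<in> V \<and> m = l then Some (Inr l) else None)"
| "compl_star V A s t star (Inr l) (Inl y) =
     (if y \<in> A \<and> l \<in> V \<and> s y = l then Some (Inl y) else None)"
| "compl_star V A s t star (Inl x) (Inr l) =
     (if x \<in> A \<and> l \<in> V \<and> s x = l then Some (Inr (t x)) else None)"
| "compl_star V A s t star (Inl x) (Inl y) =
     (if x \<in> A \<and> y \<in> A \<and> s x = s y then
        (if x = y then Some (Inr (t x)) else map_option Inl (star x y))
      else None)"

end

theory Submission
  imports Defs
begin

text \<open>The inserted loops satisfy the unit laws by construction, and a product of two
  distinct arrows of Q is never an inserted loop, which gives unitality. For the cube axiom
  the cases where one of x, y, z is a loop or two of them coincide reduce to the unit laws
  and the target axiom. In the remaining case x, y, z are distinct arrows of Q with a common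
  source: totality of x \<star> _ makes all products defined, and its injectivity makes
  x \<star> y \<noteq> x \<star> z and y \<star> x \<noteq> y \<star> z, so the completed products
  agree with the original ones and the cube axiom of Q applies.\<close>

lemma compl_star_unit_left:
  assumes "quiver V A s t" "X \<in> compl_arrows V A"
  shows "compl_star V A s t star (Inr (compl_src s X)) X = Some X"
  using assms by (cases X) (auto simp: compl_arrows_def quiver_def)

lemma compl_star_unit_right:
  assumes "quiver V A s t" "X \<in> compl_arrows V A"
  shows "compl_star V A s t star X (Inr (compl_src s X)) = Some (Inr (compl_tgt t X))"
  using assms by (cases X) (auto simp: compl_arrows_def quiver_def)

lemma compl_star_self:
  assumes "X \<in> compl_arrows V A"
  shows "compl_star V A s t star X X = Some (Inr (compl_tgt t X))"
  using assms by (cases X) (auto simp: compl_arrows_def)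

lemma quiver_compl:
  assumes "quiver V A s t"
  shows "quiver V (compl_arrows V A) (compl_src s) (compl_tgt t)"
  using assms by (auto simp: quiver_def compl_arrows_def)

lemma compl_unit_family:
  assumes "quiver V A s t"
  shows "unit_family V (compl_arrows V A) (compl_src s) (compl_tgt t) (compl_star V A s t star) Inr"
  using assms compl_star_unit_left compl_star_unit_right compl_star_self
  unfolding unit_family_def by (auto simp: compl_arrows_def quiver_def)

lemma compl_star_eq_Inr_imp_eq:
  assumes "compl_star V A s t star X Y = Some (Inr l)" "compl_star V A s t star Y X = Some (Inr l)"
  shows "X = Y"
  using assms by (cases X; cases Y) (auto split: if_splits)

lemma compl_unital:
  assumes "quiver V A s t"
  shows "unital V (compl_arrows V A) (compl_src s) (compl_tgt t) (compl_star V A s t star)"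
  unfolding unital_def using compl_unit_family[OF assms] compl_star_eq_Inr_imp_eq by metis

locale weak_RC =
  fixes V :: "'v set" and A :: "'a set" and s t :: "'a \<Rightarrow> 'v"
    and star :: "'a \<Rightarrow> 'a \<Rightarrow> 'a option"
  assumes weak_RC_system: "weak_RC_system V A s t star"
begin

abbreviation "cA \<equiv> compl_arrows V A"
abbreviation "csrc \<equiv> compl_src s"
abbreviation "ctgt \<equiv> compl_tgt t"
abbreviation "cstar \<equiv> compl_star V A s t star"

lemma quiver: "quiver V A s t"
  using weak_RC_system unfolding weak_RC_system_def by blast

lemma star_closed: "star x y = Some z \<Longrightarrow> x \<in> A \<and> y \<in> A \<and> z \<in> A"
  using weak_RC_system unfolding weak_RC_system_def by blast

lemma star_defined_src_eq: "star x y = Some z \<Longrightarrow> s x = s y"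
  using weak_RC_system star_closed unfolding weak_RC_system_def by blast

lemma src_star: "star x y = Some z \<Longrightarrow> s z = t x"
  using weak_RC_system star_closed unfolding weak_RC_system_def
  by (metis option.sel option.simps(3))

lemma tgt_star: "star x y = Some u \<Longrightarrow> star y x = Some v \<Longrightarrow> t u = t v"
  using weak_RC_system star_closed unfolding weak_RC_system_def
  by (metis option.sel option.simps(3))

lemma star_cube:
  assumes "star x y = Some a" "star x z = Some b" "star y x = Some c" "star y z = Some d"
    and "star a b \<noteq> None"
  shows "star a b = star c d"
  using weak_RC_system assms star_closed unfolding weak_RC_system_def
  by (metis option.sel option.simps(3))

lemma compl_star_closed: "cstar X Y = Some Z \<Longrightarrow> Z \<in> cA"
  using quiver by (cases X; cases Y)
    (auto simp: compl_arrows_def quiver_def split: if_splits dest: star_closed)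

lemma compl_src_star: "cstar X Y = Some Z \<Longrightarrow> csrc Z = ctgt X"
  by (cases X; cases Y) (auto split: if_splits dest: src_star)

lemma compl_tgt_star: "cstar X Y = Some Z \<Longrightarrow> cstar Y X = Some Z' \<Longrightarrow> ctgt Z = ctgt Z'"
  by (cases X; cases Y) (auto split: if_splits dest: tgt_star)

end

locale total_left_cancellative_RC = weak_RC +
  assumes star_total: "\<lbrakk>x \<in> A; y \<in> A; s x = s y\<rbrakk> \<Longrightarrow> star x y \<noteq> None"
    and star_left_cancel:
      "\<lbrakk>x \<in> A; y \<in> A; z \<in> A; s y = s x; s z = s x; star x y = star x z\<rbrakk> \<Longrightarrow> y = z"
begin

lemma compl_star_defined_iff: "cstar X Y \<noteq> None \<longleftrightarrow> X \<in> cA \<and> Y \<in> cA \<and> csrc X = csrc Y"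
  by (cases X; cases Y) (auto simp: compl_arrows_def dest: star_total)

lemma compl_star_Inl_distinct:
  assumes "star x y = Some a" "x \<noteq> y"
  shows "cstar (Inl x) (Inl y) = Some (Inl a)"
  using assms star_closed[OF assms(1)] star_defined_src_eq[OF assms(1)] by simp

lemma compl_cube:
  assumes X: "X \<in> cA" and Y: "Y \<in> cA" and Z: "Z \<in> cA"
    and "csrc Y = csrc X" "csrc Z = csrc X"
  shows "cstar (the (cstar X Y)) (the (cstar X Z)) = cstar (the (cstar Y X)) (the (cstar Y Z))"
proof -
  obtain XY XZ YX YZ where prods: "cstar X Y = Some XY" "cstar X Z = Some XZ"
    "cstar Y X = Some YX" "cstar Y Z = Some YZ"
    using assms compl_star_defined_iff by (metis not_None_eq)
  have closed: "XY \<in> cA" "XZ \<in> cA" "YX \<in> cA" "YZ \<in> cA"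
    using prods compl_star_closed by blast+
  have src: "csrc XY = ctgt X" "csrc XZ = ctgt X" "csrc YX = ctgt Y" "csrc YZ = ctgt Y"
    using prods compl_src_star by blast+
  have tgt: "ctgt XY = ctgt YX"
    using prods compl_tgt_star by blast
  consider (XY_eq) "X = Y" | (X_unit) l where "X = Inr l" | (Y_unit) l where "Y = Inr l"
    | (Z_unit) l where "Z = Inr l" | (ZX_eq) "Z = X" | (ZY_eq) "Z = Y"
    | (distinct) x y z where "X = Inl x" "Y = Inl y" "Z = Inl z" "distinct [x, y, z]"
    by (cases X; cases Y; cases Z) auto
  then show ?thesis
  proof cases
    case XY_eq
    then show ?thesis by simp
  next
    case X_unit
    then have "l = csrc Y" "l = csrc Z"
      using assms(4,5) by simp_all
    then have "XY = Y" "XZ = Z" "YX = Inr (ctgt Y)"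
      using prods X_unit compl_star_unit_left[OF quiver Y] compl_star_unit_left[OF quiver Z]
        compl_star_unit_right[OF quiver Y] by simp_all
    then show ?thesis
      using prods src(4) compl_star_unit_left[OF quiver closed(4)] by simp
  next
    case Y_unit
    then have "l = csrc X" "l = csrc Z"
      using assms(4,5) by simp_all
    then have "XY = Inr (ctgt X)" "YX = X" "YZ = Z"
      using prods Y_unit compl_star_unit_right[OF quiver X] compl_star_unit_left[OF quiver X]
        compl_star_unit_left[OF quiver Z] by simp_all
    then show ?thesis
      using prods src(2) compl_star_unit_left[OF quiver closed(2)] by simp
  next
    case Z_unit
    \<comment> \<open>here and in the next two cases both sides are the loop at t(x \<star> y) = t(y \<star> x)\<close>
    then have "l = csrc X" "l = csrc Y"
      using assms(4,5) by simp_all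
    then have "XZ = Inr (ctgt X)" "YZ = Inr (ctgt Y)"
      using prods Z_unit compl_star_unit_right[OF quiver X] compl_star_unit_right[OF quiver Y]
      by simp_all
    then have "cstar XY XZ = Some (Inr (ctgt XY))" "cstar YX YZ = Some (Inr (ctgt YX))"
      using src(1,3) compl_star_unit_right[OF quiver closed(1)]
        compl_star_unit_right[OF quiver closed(3)] by simp_all
    then show ?thesis
      using prods tgt by simp
  next
    case ZX_eq
    then have "XZ = Inr (ctgt X)" "YZ = YX"
      using prods compl_star_self[OF X] by simp_all
    then have "cstar XY XZ = Some (Inr (ctgt XY))" "cstar YX YZ = Some (Inr (ctgt YX))"
      using src(1) compl_star_unit_right[OF quiver closed(1)] compl_star_self[OF closed(3)]
      by simp_all
    then show ?thesis
      using prods tgt by simp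
  next
    case ZY_eq
    then have "XZ = XY" "YZ = Inr (ctgt Y)"
      using prods compl_star_self[OF Y] by simp_all
    then have "cstar XY XZ = Some (Inr (ctgt XY))" "cstar YX YZ = Some (Inr (ctgt YX))"
      using src(3) compl_star_self[OF closed(1)] compl_star_unit_right[OF quiver closed(3)]
      by simp_all
    then show ?thesis
      using prods tgt by simp
  next
    case distinct
    then have A: "x \<in> A" "y \<in> A" "z \<in> A" and src_eq: "s y = s x" "s z = s x"
      and neq: "x \<noteq> y" "x \<noteq> z" "y \<noteq> z"
      using X Y Z assms(4,5) by (auto simp: compl_arrows_def)
    obtain a b c d where abcd: "star x y = Some a" "star x z = Some b"
      "star y x = Some c" "star y z = Some d"
      using A src_eq star_total by (metis not_None_eq)
    have "a \<noteq> b"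
      using star_left_cancel[OF A src_eq] abcd neq by auto
    have "c \<noteq> d"
      using star_left_cancel[of y x z] A src_eq abcd neq by auto
    have "a \<in> A" "b \<in> A" "s a = s b"
      using abcd star_closed src_star by metis+
    then obtain r where r: "star a b = Some r"
      using star_total by blast
    then have "star c d = Some r"
      using star_cube[OF abcd] by simp
    then show ?thesis
      using distinct compl_star_Inl_distinct[OF abcd(1) neq(1)]
        compl_star_Inl_distinct[OF abcd(2) neq(2)]
        compl_star_Inl_distinct[OF abcd(3) neq(1)[symmetric]]
        compl_star_Inl_distinct[OF abcd(4) neq(3)]
        compl_star_Inl_distinct[OF r \<open>a \<noteq> b\<close>]
        compl_star_Inl_distinct[OF \<open>star c d = Some r\<close> \<open>c \<noteq> d\<close>] by simp
  qed
qed

lemma compl_weak_RC_system: "weak_RC_system V cA csrc ctgt cstar"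
proof -
  have closed: "X \<in> cA \<and> Y \<in> cA \<and> Z \<in> cA" if "cstar X Y = Some Z" for X Y Z
    using that compl_star_defined_iff compl_star_closed by (metis option.distinct(1))
  have src_eq: "csrc X = csrc Y" if "cstar X Y \<noteq> None" for X Y
    using that compl_star_defined_iff by blast
  have sym_src_tgt: "cstar Y X \<noteq> None \<and> csrc (the (cstar X Y)) = ctgt X \<and>
      csrc (the (cstar Y X)) = ctgt Y \<and> ctgt (the (cstar X Y)) = ctgt (the (cstar Y X))"
    if defined: "cstar X Y \<noteq> None" for X Y
  proof -
    have "cstar Y X \<noteq> None"
      using defined compl_star_defined_iff[of X Y] compl_star_defined_iff[of Y X] by auto
    then obtain XY YX where XY: "cstar X Y = Some XY" and YX: "cstar Y X = Some YX"
      using defined by auto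
    then show ?thesis
      using compl_src_star[OF XY] compl_src_star[OF YX] compl_tgt_star[OF XY YX] by simp
  qed
  have cube: "cstar Y Z \<noteq> None \<and> cstar (the (cstar Y X)) (the (cstar Y Z)) \<noteq> None \<and>
      cstar (the (cstar X Y)) (the (cstar X Z)) = cstar (the (cstar Y X)) (the (cstar Y Z))"
    if "cstar X Y \<noteq> None" "cstar X Z \<noteq> None" for X Y Z
  proof -
    have in_cA: "X \<in> cA" "Y \<in> cA" "Z \<in> cA" and src: "csrc Y = csrc X" "csrc Z = csrc X"
      using that compl_star_defined_iff by metis+
    then obtain YX YZ where YXZ: "cstar Y X = Some YX" "cstar Y Z = Some YZ"
      using compl_star_defined_iff by (metis not_None_eq)
    have "cstar YX YZ \<noteq> None"
      using YXZ compl_star_closed compl_src_star compl_star_defined_iff by metis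
    then show ?thesis
      using YXZ compl_cube[OF in_cA src] by simp
  qed
  show ?thesis
    unfolding weak_RC_system_def
    using quiver_compl[OF quiver] closed src_eq sym_src_tgt cube by blast
qed

end

lemma left_non_degenerate_total_left_cancellative:
  assumes "weak_RC_system V A s t star" "left_non_degenerate V A s t star"
  shows "total_left_cancellative_RC V A s t star"
proof unfold_locales
  show "weak_RC_system V A s t star" by (fact assms(1))
  show "star x y \<noteq> None" if "x \<in> A" "y \<in> A" "s x = s y" for x y
    using assms(2) that unfolding left_non_degenerate_def by metis
  show "y = z" if "x \<in> A" "y \<in> A" "z \<in> A" "s y = s x" "s z = s x" "star x y = star x z"
    for x y z
  proof -
    have "inj_on (\<lambda>y. the (star x y)) {y \<in> A. s y = s x}"
      using assms(2) \<open>x \<in> A\<close> unfolding left_non_degenerate_def bij_betw_def by blast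
    moreover have "the (star x y) = the (star x z)" using that by simp
    ultimately show "y = z" using that by (simp add: inj_on_def)
  qed
qed

theorem lemma3p8:
  fixes V :: "'v set" and A :: "'a set" and s t :: "'a \<Rightarrow> 'v"
    and star :: "'a \<Rightarrow> 'a \<Rightarrow> 'a option"
  assumes "weak_RC_system V A s t star"
    and "left_non_degenerate V A s t star"
  shows "weak_RC_system V (compl_arrows V A) (compl_src s) (compl_tgt t) (compl_star V A s t star)
       \<and> unital V (compl_arrows V A) (compl_src s) (compl_tgt t) (compl_star V A s t star)
       \<and> unit_family V (compl_arrows V A) (compl_src s) (compl_tgt t) (compl_star V A s t star) Inr"
proof -
  interpret total_left_cancellative_RC V A s t star
    using assms by (rule left_non_degenerate_total_left_cancellative)
  show ?thesis
    using compl_weak_RC_system compl_unital[OF quiver] compl_unit_family[OF quiver] by blast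
qed

end
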